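(* Let $K$ be a field and $p\colon A\to B$ a morphism of cocommutative Hopf algebras over $K$. For a Hopf subalgebra $C\subseteq B$ let $p^{-1}(C)=\{x\in A \mid (p\otimes \mathrm{id}_A)\Delta(x)-1\otimes x\in C^+\otimes A\}$ (a Hopf subalgebra of $A$), and for a Hopf subalgebra $D\subseteq A$ let $p(D)$ denote its direct image. Then: (i) for all Hopf subalgebras $C$ of $B$, $p(p^{-1}(C))\subseteq C$; (ii) for all Hopf subalgebras $D$ of $A$, $D\subseteq p^{-1}(p(D))$; (iii) for all Hopf subalgebras $C\subseteq B$ and $D\subseteq A$, $D\subseteq p^{-1}(C)$ if and only if $p(D)\subseteq C$; (iv) for every Hopf subalgebra $C\subseteq B$, $C=p(p^{-1}(C))$ if and only if $C=p(D)$ for some Hopf subalgebra $D\subseteq A$.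
   Context: For a coalgebra $C$ with counit $\epsilon$, $C^+=\{x\in C\mid \epsilon(x)=0\}$. Morphisms of Hopf algebras are linear maps that are algebra and coalgebra morphisms. The set $p^{-1}(C)$ is called the h-inverse of $C$ along $p$. *)

theory Defs
  imports Complex_Main
begin

definition k_algebra :: "('k::field \<Rightarrow> 'a::ring_1 \<Rightarrow> 'a) \<Rightarrow> bool" where
  "k_algebra s \<longleftrightarrow> vector_space s \<and>
     (\<forall>c x y. s c (x * y) = s c x * y \<and> s c (x * y) = x * s c y)"

(* Elements of the algebraic tensor product V \<otimes>_K W are represented by finite
   formal sums \<Sum> v_i \<otimes> w_i, i.e. lists of pairs.  Two formal sums represent
   the same tensor iff they agree under all pairs of linear functionals
   (over a field, V \<otimes> W embeds into the bilinear forms on the product of the dual spaces). *)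
definition tensor_eq ::
  "('k::field \<Rightarrow> 'a::ab_group_add \<Rightarrow> 'a) \<Rightarrow> ('k \<Rightarrow> 'b::ab_group_add \<Rightarrow> 'b) \<Rightarrow> ('a \<times> 'b) list \<Rightarrow> ('a \<times> 'b) list \<Rightarrow> bool" where
  "tensor_eq s1 s2 xs ys \<longleftrightarrow>
     (\<forall>\<phi> \<psi>. Vector_Spaces.linear s1 (*) \<phi> \<longrightarrow> Vector_Spaces.linear s2 (*) \<psi> \<longrightarrow>
        (\<Sum>(a,b)\<leftarrow>xs. \<phi> a * \<psi> b) = (\<Sum>(a,b)\<leftarrow>ys. \<phi> a * \<psi> b))"

definition tensor3_eq ::
  "('k::field \<Rightarrow> 'a::ab_group_add \<Rightarrow> 'a) \<Rightarrow> ('k \<Rightarrow> 'b::ab_group_add \<Rightarrow> 'b) \<Rightarrow> ('k \<Rightarrow> 'c::ab_group_add \<Rightarrow> 'c)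
     \<Rightarrow> ('a \<times> 'b \<times> 'c) list \<Rightarrow> ('a \<times> 'b \<times> 'c) list \<Rightarrow> bool" where
  "tensor3_eq s1 s2 s3 xs ys \<longleftrightarrow>
     (\<forall>\<phi> \<psi> \<chi>. Vector_Spaces.linear s1 (*) \<phi> \<longrightarrow> Vector_Spaces.linear s2 (*) \<psi> \<longrightarrow>
        Vector_Spaces.linear s3 (*) \<chi> \<longrightarrow>
        (\<Sum>(a,b,c)\<leftarrow>xs. \<phi> a * \<psi> b * \<chi> c) = (\<Sum>(a,b,c)\<leftarrow>ys. \<phi> a * \<psi> b * \<chi> c))"

definition in_tensor_left ::
  "('k::field \<Rightarrow> 'a::ab_group_add \<Rightarrow> 'a) \<Rightarrow> ('k \<Rightarrow> 'b::ab_group_add \<Rightarrow> 'b) \<Rightarrow> 'a set \<Rightarrow> ('a \<times> 'b) list \<Rightarrow> bool" where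
  "in_tensor_left s1 s2 U t \<longleftrightarrow> (\<exists>ys. fst ` set ys \<subseteq> U \<and> tensor_eq s1 s2 t ys)"

definition in_tensor ::
  "('k::field \<Rightarrow> 'a::ab_group_add \<Rightarrow> 'a) \<Rightarrow> ('k \<Rightarrow> 'b::ab_group_add \<Rightarrow> 'b) \<Rightarrow> 'a set \<Rightarrow> 'b set \<Rightarrow> ('a \<times> 'b) list \<Rightarrow> bool" where
  "in_tensor s1 s2 U W t \<longleftrightarrow>
     (\<exists>ys. fst ` set ys \<subseteq> U \<and> snd ` set ys \<subseteq> W \<and> tensor_eq s1 s2 t ys)"

(* Hopf algebra (s, \<Delta>, \<epsilon>, S) on the algebra 'a; \<Delta> x is a representative of the
   coproduct as a formal sum of simple tensors. *)
definition hopf_algebra ::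
  "('k::field \<Rightarrow> 'a::ring_1 \<Rightarrow> 'a) \<Rightarrow> ('a \<Rightarrow> ('a \<times> 'a) list) \<Rightarrow> ('a \<Rightarrow> 'k) \<Rightarrow> ('a \<Rightarrow> 'a) \<Rightarrow> bool" where
  "hopf_algebra s \<Delta> \<epsilon> S \<longleftrightarrow>
     k_algebra s \<and>
     \<comment> \<open>\<Delta> linear\<close>
     (\<forall>x y. tensor_eq s s (\<Delta> (x + y)) (\<Delta> x @ \<Delta> y)) \<and>
     (\<forall>c x. tensor_eq s s (\<Delta> (s c x)) (map (\<lambda>(a,b). (s c a, b)) (\<Delta> x))) \<and>
     \<comment> \<open>\<epsilon> and S linear\<close>
     Vector_Spaces.linear s (*) \<epsilon> \<and> Vector_Spaces.linear s s S \<and>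
     \<comment> \<open>coassociativity\<close>
     (\<forall>x. tensor3_eq s s s
        (concat (map (\<lambda>(a,b). map (\<lambda>(a1,a2). (a1, a2, b)) (\<Delta> a)) (\<Delta> x)))
        (concat (map (\<lambda>(a,b). map (\<lambda>(b1,b2). (a, b1, b2)) (\<Delta> b)) (\<Delta> x)))) \<and>
     \<comment> \<open>counit\<close>
     (\<forall>x. (\<Sum>(a,b)\<leftarrow>\<Delta> x. s (\<epsilon> a) b) = x) \<and>
     (\<forall>x. (\<Sum>(a,b)\<leftarrow>\<Delta> x. s (\<epsilon> b) a) = x) \<and>
     \<comment> \<open>\<Delta> and \<epsilon> algebra morphisms\<close>
     (\<forall>x y. tensor_eq s s (\<Delta> (x * y))
        (concat (map (\<lambda>(a,b). map (\<lambda>(c,d). (a * c, b * d)) (\<Delta> y)) (\<Delta> x)))) \<and>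
     tensor_eq s s (\<Delta> 1) [(1, 1)] \<and>
     (\<forall>x y. \<epsilon> (x * y) = \<epsilon> x * \<epsilon> y) \<and> \<epsilon> 1 = 1 \<and>
     \<comment> \<open>antipode\<close>
     (\<forall>x. (\<Sum>(a,b)\<leftarrow>\<Delta> x. S a * b) = s (\<epsilon> x) 1) \<and>
     (\<forall>x. (\<Sum>(a,b)\<leftarrow>\<Delta> x. a * S b) = s (\<epsilon> x) 1)"

definition cocommutative ::
  "('k::field \<Rightarrow> 'a::ab_group_add \<Rightarrow> 'a) \<Rightarrow> ('a \<Rightarrow> ('a \<times> 'a) list) \<Rightarrow> bool" where
  "cocommutative s \<Delta> \<longleftrightarrow> (\<forall>x. tensor_eq s s (\<Delta> x) (map (\<lambda>(a,b). (b,a)) (\<Delta> x)))"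

definition hopf_morphism ::
  "('k::field \<Rightarrow> 'a::ring_1 \<Rightarrow> 'a) \<Rightarrow> ('a \<Rightarrow> ('a \<times> 'a) list) \<Rightarrow> ('a \<Rightarrow> 'k)
   \<Rightarrow> ('k \<Rightarrow> 'b::ring_1 \<Rightarrow> 'b) \<Rightarrow> ('b \<Rightarrow> ('b \<times> 'b) list) \<Rightarrow> ('b \<Rightarrow> 'k)
   \<Rightarrow> ('a \<Rightarrow> 'b) \<Rightarrow> bool" where
  "hopf_morphism sA \<Delta>A \<epsilon>A sB \<Delta>B \<epsilon>B p \<longleftrightarrow>
     Vector_Spaces.linear sA sB p \<and>
     (\<forall>x y. p (x * y) = p x * p y) \<and> p 1 = 1 \<and>
     (\<forall>x. \<epsilon>B (p x) = \<epsilon>A x) \<and>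
     (\<forall>x. tensor_eq sB sB (\<Delta>B (p x)) (map (\<lambda>(a,b). (p a, p b)) (\<Delta>A x)))"

definition hopf_subalgebra ::
  "('k::field \<Rightarrow> 'a::ring_1 \<Rightarrow> 'a) \<Rightarrow> ('a \<Rightarrow> ('a \<times> 'a) list) \<Rightarrow> ('a \<Rightarrow> 'a) \<Rightarrow> 'a set \<Rightarrow> bool" where
  "hopf_subalgebra s \<Delta> S D \<longleftrightarrow>
     module.subspace s D \<and> 1 \<in> D \<and> (\<forall>x\<in>D. \<forall>y\<in>D. x * y \<in> D) \<and>
     (\<forall>x\<in>D. in_tensor s s D D (\<Delta> x)) \<and> (\<forall>x\<in>D. S x \<in> D)"

definition aug_ideal :: "('a \<Rightarrow> 'k::zero) \<Rightarrow> 'a set \<Rightarrow> 'a set" where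
  "aug_ideal \<epsilon> C = {x \<in> C. \<epsilon> x = 0}"

definition h_inverse ::
  "('k::field \<Rightarrow> 'a::ring_1 \<Rightarrow> 'a) \<Rightarrow> ('a \<Rightarrow> ('a \<times> 'a) list)
   \<Rightarrow> ('k \<Rightarrow> 'b::ring_1 \<Rightarrow> 'b) \<Rightarrow> ('b \<Rightarrow> 'k) \<Rightarrow> ('a \<Rightarrow> 'b) \<Rightarrow> 'b set \<Rightarrow> 'a set" where
  "h_inverse sA \<Delta>A sB \<epsilon>B p C =
     {x. in_tensor_left sB sA (aug_ideal \<epsilon>B C)
           (map (\<lambda>(a,b). (p a, b)) (\<Delta>A x) @ [(- 1, x)])}"

end

theory Submission
  imports Defs
begin

text \<open>Everything is tested against linear forms: \<open>x \<in> p\<^sup>-\<^sup>1(C)\<close> iff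
  \<open>(\<phi> \<circ> p \<otimes> \<psi>) (\<Delta> x) = \<phi>(1) \<psi>(x)\<close> for every linear form \<open>\<phi>\<close> on \<open>B\<close> vanishing on
  \<open>C\<^sup>+\<close> and every linear form \<open>\<psi>\<close> on \<open>A\<close>. Taking \<open>\<psi> = \<epsilon>\<close> shows
  \<open>p(x) - \<epsilon>(x) 1 \<in> C\<^sup>+\<close>, whence (i); (ii) is the counit axiom, and (i), (ii) together with
  monotonicity of \<open>p\<^sup>-\<^sup>1\<close> give the Galois connection (iii). For (iv) it remains to show that
  \<open>p\<^sup>-\<^sup>1(C)\<close> is a Hopf subalgebra: it is closed under products because \<open>C\<^sup>+\<close> is an ideal of
  \<open>C\<close>; under \<open>\<Delta>\<close> because, by coassociativity and cocommutativity of \<open>A\<close>, both contractions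
  of \<open>\<Delta> x\<close> by linear forms lie in \<open>p\<^sup>-\<^sup>1(C)\<close> again; and under \<open>S\<close> because
  \<open>S \<circ> p = p \<circ> S\<close> and \<open>\<Delta> \<circ> S = (S \<otimes> S) \<circ> \<tau> \<circ> \<Delta>\<close>, where the flip \<open>\<tau>\<close> is harmless
  by cocommutativity.\<close>

section \<open>Linear maps and formal tensors\<close>

text \<open>\<open>Vector_Spaces.linear\<close> without its vector-space side conditions, which are carried
  separately.\<close>

definition linear_map ::
  "('k::field \<Rightarrow> 'a::ab_group_add \<Rightarrow> 'a) \<Rightarrow> ('k \<Rightarrow> 'b::ab_group_add \<Rightarrow> 'b) \<Rightarrow> ('a \<Rightarrow> 'b) \<Rightarrow> bool" where
  "linear_map s1 s2 f \<longleftrightarrow> (\<forall>x y. f (x + y) = f x + f y) \<and> (\<forall>c x. f (s1 c x) = s2 c (f x))"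

lemma vector_space_field: "vector_space ((*) :: 'k::field \<Rightarrow> 'k \<Rightarrow> 'k)"
  by unfold_locales (auto simp: algebra_simps)

lemma linear_iff_linear_map:
  "vector_space s1 \<Longrightarrow> vector_space s2 \<Longrightarrow> Vector_Spaces.linear s1 s2 f \<longleftrightarrow> linear_map s1 s2 f"
  by (auto simp: Vector_Spaces.linear_iff linear_map_def)

lemma linear_iff_linear_form:
  "vector_space s \<Longrightarrow> Vector_Spaces.linear s (*) f \<longleftrightarrow> linear_map s (*) f"
  using linear_iff_linear_map vector_space_field by blast

lemma linear_map_add: "linear_map s1 s2 f \<Longrightarrow> f (x + y) = f x + f y"
  and linear_map_scale: "linear_map s1 s2 f \<Longrightarrow> f (s1 c x) = s2 c (f x)"
  by (auto simp: linear_map_def)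

lemma linear_map_0: "linear_map s1 s2 f \<Longrightarrow> f 0 = 0"
  using linear_map_add[of s1 s2 f 0 0] by simp

lemma linear_map_neg: "linear_map s1 s2 f \<Longrightarrow> f (- x) = - f x"
  using linear_map_add[of s1 s2 f x "- x"] linear_map_0[of s1 s2 f]
  by (simp add: eq_neg_iff_add_eq_0 add.commute)

lemma linear_map_diff: "linear_map s1 s2 f \<Longrightarrow> f (x - y) = f x - f y"
  using linear_map_add[of s1 s2 f x "- y"] linear_map_neg[of s1 s2 f y] by simp

lemma linear_map_sum: "linear_map s1 s2 f \<Longrightarrow> f (sum g E) = (\<Sum>e\<in>E. f (g e))"
  by (induct E rule: infinite_finite_induct) (auto simp: linear_map_0 linear_map_add)

lemma linear_map_compose:
  "linear_map s1 s2 g \<Longrightarrow> linear_map s2 s3 f \<Longrightarrow> linear_map s1 s3 (\<lambda>x. f (g x))"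
  by (auto simp: linear_map_def)

lemma linear_map_zero: "vector_space s2 \<Longrightarrow> linear_map s1 s2 (\<lambda>x. 0)"
  by (auto simp: linear_map_def module.scale_zero_right module_iff_vector_space)

lemma linear_map_add_fun:
  "vector_space s2 \<Longrightarrow> linear_map s1 s2 f \<Longrightarrow> linear_map s1 s2 g \<Longrightarrow> linear_map s1 s2 (\<lambda>x. f x + g x)"
  by (auto simp: linear_map_def vector_space.vector_space_assms(1) algebra_simps)

lemma linear_map_diff_fun:
  "vector_space s2 \<Longrightarrow> linear_map s1 s2 f \<Longrightarrow> linear_map s1 s2 g \<Longrightarrow> linear_map s1 s2 (\<lambda>x. f x - g x)"
  by (auto simp: linear_map_def module.scale_right_diff_distrib module_iff_vector_space algebra_simps)

lemma linear_form_mult_left: "linear_map s (*) f \<Longrightarrow> linear_map s (*) (\<lambda>x. c * f x)"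
  and linear_form_mult_right: "linear_map s (*) f \<Longrightarrow> linear_map s (*) (\<lambda>x. f x * c)"
  by (auto simp: linear_map_def algebra_simps)

definition sum_pairs :: "('a \<times> 'b) list \<Rightarrow> ('a \<Rightarrow> 'b \<Rightarrow> 'c::comm_monoid_add) \<Rightarrow> 'c" where
  "sum_pairs t f = (\<Sum>(a,b)\<leftarrow>t. f a b)"

definition sum_triples :: "('a \<times> 'b \<times> 'c) list \<Rightarrow> ('a \<Rightarrow> 'b \<Rightarrow> 'c \<Rightarrow> 'd::comm_monoid_add) \<Rightarrow> 'd" where
  "sum_triples t f = (\<Sum>(a,b,c)\<leftarrow>t. f a b c)"

lemma sum_pairs_Nil [simp]: "sum_pairs [] f = 0"
  and sum_pairs_Cons [simp]: "sum_pairs ((a,b) # t) f = f a b + sum_pairs t f"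
  and sum_pairs_append [simp]: "sum_pairs (t @ u) f = sum_pairs t f + sum_pairs u f"
  by (simp_all add: sum_pairs_def)

lemma sum_pairs_cong: "(\<And>a b. (a,b) \<in> set t \<Longrightarrow> f a b = g a b) \<Longrightarrow> sum_pairs t f = sum_pairs t g"
  by (induction t) auto

lemma sum_pairs_zero [simp]: "sum_pairs t (\<lambda>a b. 0) = 0"
  by (induction t) auto

lemma sum_pairs_add: "sum_pairs t (\<lambda>a b. f a b + g a b) = sum_pairs t f + sum_pairs t g"
  by (induction t) (auto simp: algebra_simps)

lemma sum_pairs_diff:
  "sum_pairs t (\<lambda>a b. (f a b :: 'c::ab_group_add) - g a b) = sum_pairs t f - sum_pairs t g"
  by (induction t) (auto simp: algebra_simps)

lemma sum_pairs_map [simp]: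
  "sum_pairs (map (\<lambda>(a,b). (h a b, k a b)) t) f = sum_pairs t (\<lambda>a b. f (h a b) (k a b))"
  by (induction t) auto

lemma sum_pairs_concat_map [simp]:
  "sum_pairs (concat (map (\<lambda>(a,b). map (\<lambda>(c,d). (h a b c d, k a b c d)) (u a b)) t)) f
   = sum_pairs t (\<lambda>a b. sum_pairs (u a b) (\<lambda>c d. f (h a b c d) (k a b c d)))"
  by (induction t) (auto simp: sum_pairs_def o_def case_prod_unfold)

lemma sum_pairs_swap:
  "sum_pairs t (\<lambda>a b. sum_pairs u (\<lambda>c d. F a b c d)) = sum_pairs u (\<lambda>c d. sum_pairs t (\<lambda>a b. F a b c d))"
  by (induction t) (auto simp: sum_pairs_add)

lemma sum_pairs_sum: "sum_pairs t (\<lambda>a b. \<Sum>e\<in>E. F a b e) = (\<Sum>e\<in>E. sum_pairs t (\<lambda>a b. F a b e))"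
  by (induction t) (auto simp: sum.distrib)

lemma sum_pairs_mult_left: "(c::'c::semiring_0) * sum_pairs t f = sum_pairs t (\<lambda>a b. c * f a b)"
  by (induction t) (auto simp: algebra_simps)

lemma sum_pairs_scale: "vector_space s \<Longrightarrow> s c (sum_pairs t f) = sum_pairs t (\<lambda>a b. s c (f a b))"
  by (induction t)
    (auto simp: vector_space.vector_space_assms(1) module.scale_zero_right module_iff_vector_space)

lemma linear_map_sum_pairs: "linear_map s1 s2 h \<Longrightarrow> h (sum_pairs t f) = sum_pairs t (\<lambda>a b. h (f a b))"
  by (induction t) (auto simp: linear_map_0 linear_map_add)

lemma linear_map_sum_pairs_fun:
  "vector_space s2 \<Longrightarrow> (\<And>a b. linear_map s1 s2 (F a b)) \<Longrightarrow>
   linear_map s1 s2 (\<lambda>x. sum_pairs t (\<lambda>a b. F a b x))"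
  by (induction t) (auto intro!: linear_map_add_fun linear_map_zero)

lemma sum_triples_cong:
  "(\<And>a b c. (a,b,c) \<in> set t \<Longrightarrow> f a b c = g a b c) \<Longrightarrow> sum_triples t f = sum_triples t g"
  by (induction t) (auto simp: sum_triples_def)

lemma sum_triples_sum:
  "sum_triples t (\<lambda>a b c. \<Sum>e\<in>E. F a b c e) = (\<Sum>e\<in>E. sum_triples t (\<lambda>a b c. F a b c e))"
  by (induction t) (auto simp: sum_triples_def sum.distrib)

lemma sum_triples_concat_map_left:
  "sum_triples (concat (map (\<lambda>(a,b). map (\<lambda>(a1,a2). (a1, a2, b)) (u a)) t)) f
   = sum_pairs t (\<lambda>a b. sum_pairs (u a) (\<lambda>a1 a2. f a1 a2 b))"
  by (induction t) (auto simp: sum_pairs_def sum_triples_def o_def case_prod_unfold)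

lemma sum_triples_concat_map_right:
  "sum_triples (concat (map (\<lambda>(a,b). map (\<lambda>(b1,b2). (a, b1, b2)) (u b)) t)) f
   = sum_pairs t (\<lambda>a b. sum_pairs (u b) (\<lambda>b1 b2. f a b1 b2))"
  by (induction t) (auto simp: sum_pairs_def sum_triples_def o_def case_prod_unfold)

definition bilinear_map ::
  "('k::field \<Rightarrow> 'a::ab_group_add \<Rightarrow> 'a) \<Rightarrow> ('k \<Rightarrow> 'b::ab_group_add \<Rightarrow> 'b) \<Rightarrow> ('k \<Rightarrow> 'c::ab_group_add \<Rightarrow> 'c)
    \<Rightarrow> ('a \<Rightarrow> 'b \<Rightarrow> 'c) \<Rightarrow> bool" where
  "bilinear_map s1 s2 s3 \<beta> \<longleftrightarrow> (\<forall>b. linear_map s1 s3 (\<lambda>a. \<beta> a b)) \<and> (\<forall>a. linear_map s2 s3 (\<beta> a))"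

definition trilinear_form ::
  "('k::field \<Rightarrow> 'a::ab_group_add \<Rightarrow> 'a) \<Rightarrow> ('k \<Rightarrow> 'b::ab_group_add \<Rightarrow> 'b) \<Rightarrow> ('k \<Rightarrow> 'c::ab_group_add \<Rightarrow> 'c)
    \<Rightarrow> ('a \<Rightarrow> 'b \<Rightarrow> 'c \<Rightarrow> 'k) \<Rightarrow> bool" where
  "trilinear_form s1 s2 s3 \<tau> \<longleftrightarrow>
     (\<forall>b c. linear_map s1 (*) (\<lambda>a. \<tau> a b c)) \<and> (\<forall>a c. linear_map s2 (*) (\<lambda>b. \<tau> a b c)) \<and>
     (\<forall>a b. linear_map s3 (*) (\<tau> a b))"

lemma bilinear_mapI:
  "(\<And>b. linear_map s1 s3 (\<lambda>a. \<beta> a b)) \<Longrightarrow> (\<And>a. linear_map s2 s3 (\<lambda>b. \<beta> a b)) \<Longrightarrow>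
   bilinear_map s1 s2 s3 \<beta>"
  by (auto simp: bilinear_map_def)

lemma bilinear_mapD:
  "bilinear_map s1 s2 s3 \<beta> \<Longrightarrow> linear_map s1 s3 (\<lambda>a. \<beta> a b)"
  "bilinear_map s1 s2 s3 \<beta> \<Longrightarrow> linear_map s2 s3 (\<lambda>b. \<beta> a b)"
  by (auto simp: bilinear_map_def)

lemma trilinear_formI:
  "(\<And>b c. linear_map s1 (*) (\<lambda>a. \<tau> a b c)) \<Longrightarrow> (\<And>a c. linear_map s2 (*) (\<lambda>b. \<tau> a b c)) \<Longrightarrow>
   (\<And>a b. linear_map s3 (*) (\<lambda>c. \<tau> a b c)) \<Longrightarrow> trilinear_form s1 s2 s3 \<tau>"
  by (auto simp: trilinear_form_def)

lemma tensor_eq_iff: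
  "vector_space s1 \<Longrightarrow> vector_space s2 \<Longrightarrow> tensor_eq s1 s2 t t' \<longleftrightarrow>
   (\<forall>\<phi> \<psi>. linear_map s1 (*) \<phi> \<longrightarrow> linear_map s2 (*) \<psi> \<longrightarrow>
      sum_pairs t (\<lambda>a b. \<phi> a * \<psi> b) = sum_pairs t' (\<lambda>a b. \<phi> a * \<psi> b))"
  by (simp add: tensor_eq_def sum_pairs_def linear_iff_linear_form)

lemma tensor_eqD:
  "tensor_eq s1 s2 t t' \<Longrightarrow> vector_space s1 \<Longrightarrow> vector_space s2 \<Longrightarrow>
   linear_map s1 (*) \<phi> \<Longrightarrow> linear_map s2 (*) \<psi> \<Longrightarrow>
   sum_pairs t (\<lambda>a b. \<phi> a * \<psi> b) = sum_pairs t' (\<lambda>a b. \<phi> a * \<psi> b)"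
  by (simp add: tensor_eq_iff)

lemma tensor3_eqD:
  "tensor3_eq s1 s2 s3 t t' \<Longrightarrow> vector_space s1 \<Longrightarrow> vector_space s2 \<Longrightarrow> vector_space s3 \<Longrightarrow>
   linear_map s1 (*) \<phi> \<Longrightarrow> linear_map s2 (*) \<psi> \<Longrightarrow> linear_map s3 (*) \<chi> \<Longrightarrow>
   sum_triples t (\<lambda>a b c. \<phi> a * \<psi> b * \<chi> c) = sum_triples t' (\<lambda>a b c. \<phi> a * \<psi> b * \<chi> c)"
  by (simp add: tensor3_eq_def sum_triples_def linear_iff_linear_form)

lemma eq_if_linear_forms_eq:
  assumes vs: "vector_space s" and eq: "\<And>\<phi>. linear_map s (*) \<phi> \<Longrightarrow> \<phi> u = \<phi> v"
  shows "u = v"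
proof (rule ccontr)
  assume "u \<noteq> v"
  interpret vector_space s by (fact vs)
  interpret vector_space_pair s "(*) :: 'a \<Rightarrow> 'a \<Rightarrow> 'a"
    by (intro vector_space_pair.intro vs vector_space_field)
  have "independent {u - v}" using \<open>u \<noteq> v\<close> by simp
  then obtain g where "Vector_Spaces.linear s (*) g" and g1: "g (u - v) = 1"
    using linear_independent_extend[of "{u - v}" "\<lambda>_. 1"] by auto
  then have g: "linear_map s (*) g" using linear_iff_linear_form[OF vs] by simp
  have "g (u - v) = 0" using eq[OF g] by (simp add: linear_map_diff[OF g])
  with g1 show False by simp
qed

lemma linear_projection_exists:
  assumes vs: "vector_space s" and U: "module.subspace s U"
  obtains Q where "linear_map s s Q" "\<And>x. Q x \<in> U" "\<And>u. u \<in> U \<Longrightarrow> Q u = u"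
proof -
  interpret vector_space s by (fact vs)
  interpret vector_space_pair s s by (intro vector_space_pair.intro vs)
  obtain g where g: "g ` UNIV \<subseteq> U" "Vector_Spaces.linear s s g" "\<forall>v\<in>U. g (id v) = v"
    using linear_exists_left_inverse_on[OF linear_id U] by auto
  show ?thesis
  proof (rule that)
    show "linear_map s s g" using g(2) linear_iff_linear_map[OF vs vs] by simp
  qed (use g in auto)
qed

lemma in_subspace_if_annihilated:
  assumes vs: "vector_space s" and U: "module.subspace s U"
    and ann: "\<And>\<phi>. linear_map s (*) \<phi> \<Longrightarrow> \<forall>u\<in>U. \<phi> u = 0 \<Longrightarrow> \<phi> v = 0"
  shows "v \<in> U"
proof -
  obtain Q where Q: "linear_map s s Q" "\<And>x. Q x \<in> U" "\<And>u. u \<in> U \<Longrightarrow> Q u = u"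
    using linear_projection_exists[OF vs U] by blast
  have "v = Q v"
  proof (rule eq_if_linear_forms_eq[OF vs])
    fix \<phi> assume \<phi>: "linear_map s (*) \<phi>"
    have "linear_map s (*) (\<lambda>z. \<phi> z - \<phi> (Q z))"
      by (intro linear_map_diff_fun[OF vector_space_field] \<phi> linear_map_compose[OF Q(1) \<phi>])
    then show "\<phi> v = \<phi> (Q v)" using ann Q(3) by fastforce
  qed
  then show ?thesis using Q(2) by metis
qed

lemma finite_basis_expansion:
  assumes vs: "vector_space s" and fin: "finite X"
  obtains E r where "finite E" "\<And>e. linear_map s (*) (\<lambda>v. r v e)"
    "\<And>v. v \<in> X \<Longrightarrow> v = (\<Sum>e\<in>E. s (r v e) e)"
proof -
  interpret vector_space s by (fact vs)
  define B where "B = extend_basis {}"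
  have iB: "independent B" and sB: "span B = UNIV"
    unfolding B_def using independent_extend_basis span_extend_basis independent_empty by auto
  define E where "E = (\<Union>v\<in>X. {e. representation B v e \<noteq> 0})"
  have "finite E" unfolding E_def using fin finite_representation by auto
  moreover have "linear_map s (*) (\<lambda>v. representation B v e)" for e
    using linear_representation[OF iB sB] linear_iff_linear_form[OF vs] by simp
  moreover have "v = (\<Sum>e\<in>E. s (representation B v e) e)" if "v \<in> X" for v
  proof -
    have "v = (\<Sum>e | representation B v e \<noteq> 0. s (representation B v e) e)"
      using sum_nonzero_representation_eq[OF iB] sB by simp
    also have "\<dots> = (\<Sum>e\<in>E. s (representation B v e) e)"
      by (rule sum.mono_neutral_left) (use \<open>finite E\<close> that in \<open>auto simp: E_def\<close>)
    finally show ?thesis .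
  qed
  ultimately show ?thesis using that by blast
qed

lemma tensor_eq_bilinear_form:
  assumes vs1: "vector_space s1" and vs2: "vector_space s2" and te: "tensor_eq s1 s2 t t'"
    and \<beta>: "bilinear_map s1 s2 (*) \<beta>"
  shows "sum_pairs t \<beta> = sum_pairs t' \<beta>"
proof -
  obtain E r where "finite E" and r: "\<And>e. linear_map s1 (*) (\<lambda>v. r v e)"
    and expand: "\<And>v. v \<in> fst ` set (t @ t') \<Longrightarrow> v = (\<Sum>e\<in>E. s1 (r v e) e)"
    using finite_basis_expansion[OF vs1, of "fst ` set (t @ t')"] by blast
  have \<beta>_expand: "\<beta> a b = (\<Sum>e\<in>E. r a e * \<beta> e b)" if "(a, b) \<in> set (t @ t')" for a b
  proof -
    have "\<beta> a b = \<beta> (\<Sum>e\<in>E. s1 (r a e) e) b" using expand that by force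
    then show ?thesis
      by (simp add: linear_map_sum[OF bilinear_mapD(1)[OF \<beta>]] linear_map_scale[OF bilinear_mapD(1)[OF \<beta>]])
  qed
  have "sum_pairs t \<beta> = sum_pairs t (\<lambda>a b. \<Sum>e\<in>E. r a e * \<beta> e b)"
    using \<beta>_expand by (intro sum_pairs_cong) simp
  also have "\<dots> = (\<Sum>e\<in>E. sum_pairs t' (\<lambda>a b. r a e * \<beta> e b))"
    unfolding sum_pairs_sum by (intro sum.cong refl tensor_eqD[OF te vs1 vs2 r bilinear_mapD(2)[OF \<beta>]])
  also have "\<dots> = sum_pairs t' \<beta>"
    unfolding sum_pairs_sum[symmetric] using \<beta>_expand by (intro sum_pairs_cong) simp
  finally show ?thesis .
qed

lemma tensor_eq_bilinear:
  assumes "vector_space s1" "vector_space s2" "vector_space s3"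
    and "tensor_eq s1 s2 t t'" and \<beta>: "bilinear_map s1 s2 s3 \<beta>"
  shows "sum_pairs t \<beta> = sum_pairs t' \<beta>"
proof (rule eq_if_linear_forms_eq[OF \<open>vector_space s3\<close>])
  fix \<theta> assume \<theta>: "linear_map s3 (*) \<theta>"
  have "sum_pairs t (\<lambda>a b. \<theta> (\<beta> a b)) = sum_pairs t' (\<lambda>a b. \<theta> (\<beta> a b))"
    using assms linear_map_compose[OF bilinear_mapD(1)[OF \<beta>] \<theta>]
      linear_map_compose[OF bilinear_mapD(2)[OF \<beta>] \<theta>]
    by (intro tensor_eq_bilinear_form bilinear_mapI)
  then show "\<theta> (sum_pairs t \<beta>) = \<theta> (sum_pairs t' \<beta>)" by (simp add: linear_map_sum_pairs[OF \<theta>])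
qed

lemma tensor3_eq_trilinear_form:
  assumes vs1: "vector_space s1" and vs2: "vector_space s2" and vs3: "vector_space s3"
    and te: "tensor3_eq s1 s2 s3 t t'" and \<tau>: "trilinear_form s1 s2 s3 \<tau>"
  shows "sum_triples t \<tau> = sum_triples t' \<tau>"
proof -
  have l1: "linear_map s1 (*) (\<lambda>a. \<tau> a b c)" and l2: "linear_map s2 (*) (\<lambda>b. \<tau> a b c)"
    and l3: "linear_map s3 (*) (\<tau> a b)" for a b c
    using \<tau> by (auto simp: trilinear_form_def)
  obtain E1 r1 where "finite E1" and r1: "\<And>e. linear_map s1 (*) (\<lambda>v. r1 v e)"
    and expand1: "\<And>v. v \<in> fst ` set (t @ t') \<Longrightarrow> v = (\<Sum>e\<in>E1. s1 (r1 v e) e)"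
    using finite_basis_expansion[OF vs1, of "fst ` set (t @ t')"] by blast
  obtain E2 r2 where "finite E2" and r2: "\<And>e. linear_map s2 (*) (\<lambda>v. r2 v e)"
    and expand2: "\<And>v. v \<in> (fst \<circ> snd) ` set (t @ t') \<Longrightarrow> v = (\<Sum>e\<in>E2. s2 (r2 v e) e)"
    using finite_basis_expansion[OF vs2, of "(fst \<circ> snd) ` set (t @ t')"] by blast
  have \<tau>_expand: "\<tau> a b c = (\<Sum>e\<in>E1. \<Sum>e'\<in>E2. r1 a e * r2 b e' * \<tau> e e' c)"
    if "(a, b, c) \<in> set (t @ t')" for a b c
  proof -
    have "\<tau> a b c = \<tau> (\<Sum>e\<in>E1. s1 (r1 a e) e) (\<Sum>e'\<in>E2. s2 (r2 b e') e') c"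
      using expand1 expand2 that by force
    then show ?thesis
      by (simp add: linear_map_sum[OF l1] linear_map_scale[OF l1] linear_map_sum[OF l2]
          linear_map_scale[OF l2] sum_distrib_left sum.swap[of _ E2 E1] mult_ac)
  qed
  have "sum_triples t \<tau> = sum_triples t (\<lambda>a b c. \<Sum>e\<in>E1. \<Sum>e'\<in>E2. r1 a e * r2 b e' * \<tau> e e' c)"
    using \<tau>_expand by (intro sum_triples_cong) simp
  also have "\<dots> = (\<Sum>e\<in>E1. \<Sum>e'\<in>E2. sum_triples t' (\<lambda>a b c. r1 a e * r2 b e' * \<tau> e e' c))"
    unfolding sum_triples_sum by (intro sum.cong refl tensor3_eqD[OF te vs1 vs2 vs3 r1 r2 l3])
  also have "\<dots> = sum_triples t' \<tau>"
    unfolding sum_triples_sum[symmetric] using \<tau>_expand by (intro sum_triples_cong) simp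
  finally show ?thesis .
qed

lemma in_tensor_left_iff:
  assumes vs1: "vector_space s1" and vs2: "vector_space s2" and U: "module.subspace s1 U"
  shows "in_tensor_left s1 s2 U t \<longleftrightarrow>
    (\<forall>\<phi> \<psi>. linear_map s1 (*) \<phi> \<longrightarrow> (\<forall>u\<in>U. \<phi> u = 0) \<longrightarrow> linear_map s2 (*) \<psi> \<longrightarrow>
       sum_pairs t (\<lambda>a b. \<phi> a * \<psi> b) = 0)"
proof safe
  fix \<phi> \<psi> assume "in_tensor_left s1 s2 U t" and \<phi>: "linear_map s1 (*) \<phi>"
    and \<phi>U: "\<forall>u\<in>U. \<phi> u = 0" and \<psi>: "linear_map s2 (*) \<psi>"
  then obtain ys where ys: "fst ` set ys \<subseteq> U" "tensor_eq s1 s2 t ys"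
    by (auto simp: in_tensor_left_def)
  have "sum_pairs t (\<lambda>a b. \<phi> a * \<psi> b) = sum_pairs ys (\<lambda>a b. \<phi> a * \<psi> b)"
    by (rule tensor_eqD[OF ys(2) vs1 vs2 \<phi> \<psi>])
  also have "\<dots> = sum_pairs ys (\<lambda>a b. 0)"
    using ys(1) \<phi>U by (intro sum_pairs_cong) force
  finally show "sum_pairs t (\<lambda>a b. \<phi> a * \<psi> b) = 0" by simp
next
  assume ann: "\<forall>\<phi> \<psi>. linear_map s1 (*) \<phi> \<longrightarrow> (\<forall>u\<in>U. \<phi> u = 0) \<longrightarrow> linear_map s2 (*) \<psi> \<longrightarrow>
    sum_pairs t (\<lambda>a b. \<phi> a * \<psi> b) = 0"
  obtain Q where Q: "linear_map s1 s1 Q" "\<And>x. Q x \<in> U" "\<And>u. u \<in> U \<Longrightarrow> Q u = u"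
    using linear_projection_exists[OF vs1 U] by blast
  have "tensor_eq s1 s2 t (map (\<lambda>(a,b). (Q a, b)) t)"
  proof (rule tensor_eq_iff[OF vs1 vs2, THEN iffD2], intro allI impI)
    fix \<phi> \<psi> assume \<phi>: "linear_map s1 (*) \<phi>" and \<psi>: "linear_map s2 (*) \<psi>"
    have "linear_map s1 (*) (\<lambda>z. \<phi> z - \<phi> (Q z))"
      by (intro linear_map_diff_fun[OF vector_space_field] \<phi> linear_map_compose[OF Q(1) \<phi>])
    then have "sum_pairs t (\<lambda>a b. (\<phi> a - \<phi> (Q a)) * \<psi> b) = 0"
      using ann \<psi> Q(3) by auto
    then show "sum_pairs t (\<lambda>a b. \<phi> a * \<psi> b) = sum_pairs (map (\<lambda>(a,b). (Q a, b)) t) (\<lambda>a b. \<phi> a * \<psi> b)"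
      by (simp add: left_diff_distrib sum_pairs_diff)
  qed
  then show "in_tensor_left s1 s2 U t"
    unfolding in_tensor_left_def using Q(2) by (intro exI[of _ "map (\<lambda>(a,b). (Q a, b)) t"]) auto
qed

lemma in_tensor_left_mono: "U \<subseteq> U' \<Longrightarrow> in_tensor_left s1 s2 U t \<Longrightarrow> in_tensor_left s1 s2 U' t"
  by (auto simp: in_tensor_left_def)

lemma in_tensor_if_contractions_in:
  assumes vs1: "vector_space s1" and vs2: "vector_space s2"
    and U: "module.subspace s1 U" and W: "module.subspace s2 W"
    and left: "\<And>\<psi>. linear_map s2 (*) \<psi> \<Longrightarrow> sum_pairs t (\<lambda>a b. s1 (\<psi> b) a) \<in> U"
    and right: "\<And>\<phi>. linear_map s1 (*) \<phi> \<Longrightarrow> sum_pairs t (\<lambda>a b. s2 (\<phi> a) b) \<in> W"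
  shows "in_tensor s1 s2 U W t"
proof -
  obtain Q where Q: "linear_map s1 s1 Q" "\<And>x. Q x \<in> U" "\<And>u. u \<in> U \<Longrightarrow> Q u = u"
    using linear_projection_exists[OF vs1 U] by blast
  obtain R where R: "linear_map s2 s2 R" "\<And>x. R x \<in> W" "\<And>w. w \<in> W \<Longrightarrow> R w = w"
    using linear_projection_exists[OF vs2 W] by blast
  have "tensor_eq s1 s2 t (map (\<lambda>(a,b). (Q a, R b)) t)"
  proof (rule tensor_eq_iff[OF vs1 vs2, THEN iffD2], intro allI impI)
    fix \<phi> \<psi> assume \<phi>: "linear_map s1 (*) \<phi>" and \<psi>: "linear_map s2 (*) \<psi>"
    have \<phi>Q: "linear_map s1 (*) (\<lambda>z. \<phi> (Q z))" by (rule linear_map_compose[OF Q(1) \<phi>])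
    have \<phi>': "linear_map s1 (*) (\<lambda>z. \<phi> z - \<phi> (Q z))"
      by (intro linear_map_diff_fun[OF vector_space_field] \<phi> \<phi>Q)
    have \<psi>': "linear_map s2 (*) (\<lambda>z. \<psi> z - \<psi> (R z))"
      by (intro linear_map_diff_fun[OF vector_space_field] \<psi> linear_map_compose[OF R(1) \<psi>])
    have "sum_pairs t (\<lambda>a b. (\<phi> a - \<phi> (Q a)) * \<psi> b) = 0"
      using linear_map_sum_pairs[OF \<phi>', of t "\<lambda>a b. s1 (\<psi> b) a"] Q(3)[OF left[OF \<psi>]]
      by (simp add: linear_map_scale[OF \<phi>'] mult.commute)
    moreover have "sum_pairs t (\<lambda>a b. \<phi> (Q a) * (\<psi> b - \<psi> (R b))) = 0"
      using linear_map_sum_pairs[OF \<psi>', of t "\<lambda>a b. s2 (\<phi> (Q a)) b"] R(3)[OF right[OF \<phi>Q]]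
      by (simp add: linear_map_scale[OF \<psi>'])
    ultimately show "sum_pairs t (\<lambda>a b. \<phi> a * \<psi> b) = sum_pairs (map (\<lambda>(a,b). (Q a, R b)) t) (\<lambda>a b. \<phi> a * \<psi> b)"
      by (simp add: algebra_simps sum_pairs_diff sum_pairs_add)
  qed
  then show ?thesis
    unfolding in_tensor_def using Q(2) R(2) by (intro exI[of _ "map (\<lambda>(a,b). (Q a, R b)) t"]) auto
qed

lemma subspace_iff:
  "vector_space s \<Longrightarrow> module.subspace s U \<longleftrightarrow>
   0 \<in> U \<and> (\<forall>x\<in>U. \<forall>y\<in>U. x + y \<in> U) \<and> (\<forall>c. \<forall>x\<in>U. s c x \<in> U)"
  by (simp add: module.subspace_def module_iff_vector_space)

lemma linear_map_scale_left: "vector_space s \<Longrightarrow> linear_map s s (\<lambda>x. s c x)"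
  by (auto simp: linear_map_def vector_space.vector_space_assms mult.commute)

lemma linear_map_scale_by_form:
  "vector_space s2 \<Longrightarrow> linear_map s1 (*) f \<Longrightarrow> linear_map s1 s2 (\<lambda>x. s2 (f x) v)"
  by (auto simp: linear_map_def vector_space.vector_space_assms)

section \<open>Hopf algebras\<close>

locale hopf_alg =
  fixes s :: "'k::field \<Rightarrow> 'a::ring_1 \<Rightarrow> 'a" and \<Delta> :: "'a \<Rightarrow> ('a \<times> 'a) list"
    and \<epsilon> :: "'a \<Rightarrow> 'k" and S :: "'a \<Rightarrow> 'a"
  assumes hopf_algebra: "hopf_algebra s \<Delta> \<epsilon> S"
begin

lemma vector_space_scale: "vector_space s"
  using hopf_algebra by (simp add: hopf_algebra_def k_algebra_def)

lemma scale_one [simp]: "s 1 x = x"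
  using vector_space.vector_space_assms(4)[OF vector_space_scale] .

lemma scale_minus_left [simp]: "s (- c) x = - s c x"
  using module.scale_minus_left[OF vector_space_scale[unfolded module_iff_vector_space[symmetric]]] .

lemma scale_mult_left [simp]: "s c x * y = s c (x * y)"
  and scale_mult_right [simp]: "x * s c y = s c (x * y)"
  using hopf_algebra unfolding hopf_algebra_def k_algebra_def by metis+

lemma coprod_add: "tensor_eq s s (\<Delta> (x + y)) (\<Delta> x @ \<Delta> y)"
  and coprod_scale: "tensor_eq s s (\<Delta> (s c x)) (map (\<lambda>(a,b). (s c a, b)) (\<Delta> x))"
  and counit_linear: "linear_map s (*) \<epsilon>"
  and antipode_linear: "linear_map s s S"
  and coassoc: "tensor3_eq s s s
        (concat (map (\<lambda>(a,b). map (\<lambda>(a1,a2). (a1, a2, b)) (\<Delta> a)) (\<Delta> x)))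
        (concat (map (\<lambda>(a,b). map (\<lambda>(b1,b2). (a, b1, b2)) (\<Delta> b)) (\<Delta> x)))"
  and counit_left: "sum_pairs (\<Delta> x) (\<lambda>a b. s (\<epsilon> a) b) = x"
  and counit_right: "sum_pairs (\<Delta> x) (\<lambda>a b. s (\<epsilon> b) a) = x"
  and coprod_mult: "tensor_eq s s (\<Delta> (x * y))
        (concat (map (\<lambda>(a,b). map (\<lambda>(c,d). (a * c, b * d)) (\<Delta> y)) (\<Delta> x)))"
  and coprod_one: "tensor_eq s s (\<Delta> 1) [(1, 1)]"
  and counit_mult: "\<epsilon> (x * y) = \<epsilon> x * \<epsilon> y"
  and counit_one: "\<epsilon> 1 = 1"
  and antipode_left: "sum_pairs (\<Delta> x) (\<lambda>a b. S a * b) = s (\<epsilon> x) 1"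
  and antipode_right: "sum_pairs (\<Delta> x) (\<lambda>a b. a * S b) = s (\<epsilon> x) 1"
  using hopf_algebra vector_space_scale
  by (auto simp: hopf_algebra_def sum_pairs_def linear_iff_linear_map linear_iff_linear_form)

lemma linear_mult_left: "linear_map s s (\<lambda>x. c * x)"
  and linear_mult_right: "linear_map s s (\<lambda>x. x * c)"
  by (auto simp: linear_map_def ring_distribs)

lemma linear_mult_antipode: "linear_map s s (\<lambda>x. c * S x)"
  by (rule linear_map_compose[OF antipode_linear linear_mult_left])

lemma bilinear_form_mult_left: "bilinear_map s s (*) \<kappa> \<Longrightarrow> bilinear_map s s (*) (\<lambda>c d. \<kappa> (u * c) (v * d))"
  and bilinear_form_mult_right: "bilinear_map s s (*) \<kappa> \<Longrightarrow> bilinear_map s s (*) (\<lambda>c d. \<kappa> (c * u) (d * v))"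
  by (auto simp: bilinear_map_def intro: linear_map_compose[OF linear_mult_left]
      linear_map_compose[OF linear_mult_right])

lemma sum_pairs_coprod_eq:
  "bilinear_map s s s3 \<beta> \<Longrightarrow> vector_space s3 \<Longrightarrow> tensor_eq s s (\<Delta> x) t \<Longrightarrow>
   sum_pairs (\<Delta> x) \<beta> = sum_pairs t \<beta>"
  using tensor_eq_bilinear[OF vector_space_scale vector_space_scale] by blast

lemma linear_map_sum_pairs_coprod:
  assumes \<beta>: "bilinear_map s s s3 \<beta>" and vs3: "vector_space s3"
  shows "linear_map s s3 (\<lambda>u. sum_pairs (\<Delta> u) \<beta>)"
  unfolding linear_map_def
proof safe
  fix x y show "sum_pairs (\<Delta> (x + y)) \<beta> = sum_pairs (\<Delta> x) \<beta> + sum_pairs (\<Delta> y) \<beta>"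
    using sum_pairs_coprod_eq[OF \<beta> vs3 coprod_add] by simp
next
  fix c x
  have "sum_pairs (\<Delta> (s c x)) \<beta> = sum_pairs (\<Delta> x) (\<lambda>a b. \<beta> (s c a) b)"
    using sum_pairs_coprod_eq[OF \<beta> vs3 coprod_scale] by simp
  then show "sum_pairs (\<Delta> (s c x)) \<beta> = s3 c (sum_pairs (\<Delta> x) \<beta>)"
    by (simp add: linear_map_scale[OF bilinear_mapD(1)[OF \<beta>]] sum_pairs_scale[OF vs3])
qed

lemma coassoc_sum_pairs:
  assumes "trilinear_form s s s \<tau>"
  shows "sum_pairs (\<Delta> x) (\<lambda>a b. sum_pairs (\<Delta> a) (\<lambda>a1 a2. \<tau> a1 a2 b))
    = sum_pairs (\<Delta> x) (\<lambda>a b. sum_pairs (\<Delta> b) (\<lambda>b1 b2. \<tau> a b1 b2))"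
  using tensor3_eq_trilinear_form[OF vector_space_scale vector_space_scale vector_space_scale coassoc assms]
  unfolding sum_triples_concat_map_left sum_triples_concat_map_right .

lemma counit_left_form: "linear_map s (*) f \<Longrightarrow> sum_pairs (\<Delta> x) (\<lambda>a b. \<epsilon> a * f b) = f x"
  using linear_map_sum_pairs[of s "(*)" f "\<Delta> x" "\<lambda>a b. s (\<epsilon> a) b"]
  by (simp add: counit_left linear_map_scale)

lemma counit_right_form: "linear_map s (*) f \<Longrightarrow> sum_pairs (\<Delta> x) (\<lambda>a b. f a * \<epsilon> b) = f x"
  using linear_map_sum_pairs[of s "(*)" f "\<Delta> x" "\<lambda>a b. s (\<epsilon> b) a"]
  by (simp add: counit_right linear_map_scale mult.commute)

lemma cocommutative_sum_pairs:
  assumes "cocommutative s \<Delta>" and \<beta>: "bilinear_map s s s3 \<beta>" and "vector_space s3"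
  shows "sum_pairs (\<Delta> x) \<beta> = sum_pairs (\<Delta> x) (\<lambda>a b. \<beta> b a)"
  using sum_pairs_coprod_eq[OF \<beta> \<open>vector_space s3\<close>, of x "map (\<lambda>(a,b). (b,a)) (\<Delta> x)"] assms(1)
  unfolding cocommutative_def by simp

lemma counit_antipode: "\<epsilon> (S x) = \<epsilon> x"
proof -
  have "sum_pairs (\<Delta> x) (\<lambda>a b. \<epsilon> (S a) * \<epsilon> b) = \<epsilon> x"
    using linear_map_sum_pairs[OF counit_linear, of "\<Delta> x" "\<lambda>a b. S a * b"]
    by (simp add: antipode_left counit_mult linear_map_scale[OF counit_linear] counit_one)
  then show ?thesis
    using counit_right_form[OF linear_map_compose[OF antipode_linear counit_linear]] by simp
qed

lemma antipode_one: "S 1 = 1"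
proof -
  have "bilinear_map s s s (\<lambda>a b. S a * b)"
    by (intro bilinear_mapI linear_map_compose[OF antipode_linear linear_mult_right] linear_mult_left)
  then have "sum_pairs (\<Delta> 1) (\<lambda>a b. S a * b) = S 1"
    using sum_pairs_coprod_eq[OF _ vector_space_scale coprod_one] by simp
  then show ?thesis using antipode_left[of 1] by (simp add: counit_one)
qed

text \<open>Tested against bilinear forms, \<open>(S \<otimes> S) \<circ> \<tau> \<circ> \<Delta>\<close> is a right and \<open>\<Delta> \<circ> S\<close> a left
  convolution inverse of \<open>\<Delta>\<close>; hence the two agree.\<close>

lemma coprod_convolution_flipped_antipode:
  assumes \<gamma>: "bilinear_map s s (*) \<gamma>"
  shows "sum_pairs (\<Delta> z) (\<lambda>a b. sum_pairs (\<Delta> b) (\<lambda>b1 b2.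
      sum_pairs (\<Delta> a) (\<lambda>a1 a2. \<gamma> (a1 * S b2) (a2 * S b1)))) = \<epsilon> z * \<gamma> 1 1"
proof -
  have \<gamma>1: "linear_map s (*) (\<lambda>a. \<gamma> a b)" and \<gamma>2: "linear_map s (*) (\<gamma> a)" for a b
    using bilinear_mapD[OF \<gamma>] by auto
  define \<tau> where "\<tau> a b1 b2 = sum_pairs (\<Delta> a) (\<lambda>a1 a2. \<gamma> (a1 * S b2) (a2 * S b1))" for a b1 b2
  have \<tau>: "trilinear_form s s s \<tau>"
    unfolding \<tau>_def
    by (intro trilinear_formI linear_map_sum_pairs_coprod[OF bilinear_mapI vector_space_field]
        linear_map_sum_pairs_fun[OF vector_space_field] linear_map_compose[OF linear_mult_right \<gamma>1]
        linear_map_compose[OF linear_mult_right \<gamma>2] linear_map_compose[OF linear_mult_antipode \<gamma>1]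
        linear_map_compose[OF linear_mult_antipode \<gamma>2])
  have \<tau>': "trilinear_form s s s (\<lambda>u v w. \<gamma> (u * S b) (v * S w))" for b
    by (intro trilinear_formI linear_map_compose[OF linear_mult_right \<gamma>1]
        linear_map_compose[OF linear_mult_right \<gamma>2] linear_map_compose[OF linear_mult_antipode \<gamma>2])
  have "sum_pairs (\<Delta> z) (\<lambda>a b. sum_pairs (\<Delta> b) (\<lambda>b1 b2.
      sum_pairs (\<Delta> a) (\<lambda>a1 a2. \<gamma> (a1 * S b2) (a2 * S b1))))
    = sum_pairs (\<Delta> z) (\<lambda>a b. sum_pairs (\<Delta> a) (\<lambda>a1 a2. \<tau> a1 a2 b))"
    unfolding \<tau>_def[symmetric] by (rule coassoc_sum_pairs[OF \<tau>, symmetric])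
  also have "\<dots> = sum_pairs (\<Delta> z) (\<lambda>a b. sum_pairs (\<Delta> a) (\<lambda>a1 a2.
      sum_pairs (\<Delta> a2) (\<lambda>v w. \<gamma> (a1 * S b) (v * S w))))"
    unfolding \<tau>_def by (intro sum_pairs_cong coassoc_sum_pairs[OF \<tau>'])
  also have "\<dots> = sum_pairs (\<Delta> z) (\<lambda>a b. sum_pairs (\<Delta> a) (\<lambda>a1 a2. \<gamma> (a1 * S b) 1 * \<epsilon> a2))"
    by (intro sum_pairs_cong)
      (simp add: linear_map_sum_pairs[OF \<gamma>2, symmetric] antipode_right linear_map_scale[OF \<gamma>2]
        mult.commute)
  also have "\<dots> = sum_pairs (\<Delta> z) (\<lambda>a b. \<gamma> (a * S b) 1)"
    by (intro sum_pairs_cong counit_right_form linear_map_compose[OF linear_mult_right \<gamma>1])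
  also have "\<dots> = \<epsilon> z * \<gamma> 1 1"
    by (simp add: linear_map_sum_pairs[OF \<gamma>1, symmetric] antipode_right linear_map_scale[OF \<gamma>1])
  finally show ?thesis .
qed

lemma coprod_antipode_convolution_coprod:
  assumes \<kappa>: "bilinear_map s s (*) \<kappa>"
  shows "sum_pairs (\<Delta> m) (\<lambda>a b. sum_pairs (\<Delta> b) (\<lambda>b1 b2.
      sum_pairs (\<Delta> (S a)) (\<lambda>u1 u2. \<kappa> (u1 * b1) (u2 * b2)))) = \<epsilon> m * \<kappa> 1 1"
proof -
  have \<Delta>\<kappa>: "linear_map s (*) (\<lambda>u. sum_pairs (\<Delta> u) \<kappa>)"
    by (rule linear_map_sum_pairs_coprod[OF \<kappa> vector_space_field])
  have "sum_pairs (\<Delta> m) (\<lambda>a b. sum_pairs (\<Delta> b) (\<lambda>b1 b2.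
      sum_pairs (\<Delta> (S a)) (\<lambda>u1 u2. \<kappa> (u1 * b1) (u2 * b2))))
    = sum_pairs (\<Delta> m) (\<lambda>a b. sum_pairs (\<Delta> (S a * b)) \<kappa>)"
    using sum_pairs_coprod_eq[OF \<kappa> vector_space_field coprod_mult]
    by (intro sum_pairs_cong) (simp, rule sum_pairs_swap)
  also have "\<dots> = sum_pairs (\<Delta> (sum_pairs (\<Delta> m) (\<lambda>a b. S a * b))) \<kappa>"
    by (rule linear_map_sum_pairs[OF \<Delta>\<kappa>, symmetric])
  also have "\<dots> = \<epsilon> m * \<kappa> 1 1"
    using sum_pairs_coprod_eq[OF \<kappa> vector_space_field coprod_one]
    by (simp add: antipode_left linear_map_scale[OF \<Delta>\<kappa>])
  finally show ?thesis .
qed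

lemma coprod_antipode:
  assumes \<kappa>: "bilinear_map s s (*) \<kappa>"
  shows "sum_pairs (\<Delta> (S y)) \<kappa> = sum_pairs (\<Delta> y) (\<lambda>a b. \<kappa> (S b) (S a))"
proof -
  define \<gamma> where "\<gamma> a c d = sum_pairs (\<Delta> (S a)) (\<lambda>u1 u2. \<kappa> (u1 * c) (u2 * d))" for a c d
  have \<gamma>: "bilinear_map s s (*) (\<gamma> a)" for a
    unfolding \<gamma>_def using bilinear_mapD[OF bilinear_form_mult_left[OF \<kappa>]]
    by (intro bilinear_mapI linear_map_sum_pairs_fun[OF vector_space_field])
  have \<gamma>0: "linear_map s (*) (\<lambda>a. \<gamma> a c d)" for c d
    unfolding \<gamma>_def
    by (rule linear_map_compose[OF antipode_linear linear_map_sum_pairs_coprod[OF bilinear_form_mult_right[OF \<kappa>] vector_space_field]])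
  define T where "T a b' b'' =
    sum_pairs (\<Delta> b'') (\<lambda>b3 b4. sum_pairs (\<Delta> b') (\<lambda>b1 b2. \<gamma> a (b1 * S b4) (b2 * S b3)))" for a b' b''
  have T: "trilinear_form s s s T"
    unfolding T_def using bilinear_mapD[OF \<gamma>]
    by (intro trilinear_formI linear_map_sum_pairs_coprod[OF bilinear_mapI vector_space_field]
        linear_map_sum_pairs_fun[OF vector_space_field] \<gamma>0 linear_map_compose[OF linear_mult_right]
        linear_map_compose[OF linear_mult_antipode])
  have "sum_pairs (\<Delta> (S y)) \<kappa> = sum_pairs (\<Delta> y) (\<lambda>a b. \<gamma> a 1 1 * \<epsilon> b)"
    using counit_right_form[OF \<gamma>0[of 1 1], of y] by (simp add: \<gamma>_def)
  also have "\<dots> = sum_pairs (\<Delta> y) (\<lambda>a b. sum_pairs (\<Delta> b) (T a))"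
    using coprod_convolution_flipped_antipode[OF \<gamma>] by (simp add: T_def[abs_def] mult.commute)
  also have "\<dots> = sum_pairs (\<Delta> y) (\<lambda>m b''. sum_pairs (\<Delta> m) (\<lambda>a b'. T a b' b''))"
    by (rule coassoc_sum_pairs[OF T, symmetric])
  also have "\<dots> = sum_pairs (\<Delta> y) (\<lambda>m b''. \<epsilon> m * sum_pairs (\<Delta> b'') (\<lambda>b3 b4. \<kappa> (S b4) (S b3)))"
    using coprod_antipode_convolution_coprod[OF bilinear_form_mult_right[OF \<kappa>]] unfolding T_def
    by (intro sum_pairs_cong, subst sum_pairs_swap) (simp add: \<gamma>_def mult.assoc sum_pairs_mult_left)
  also have "\<dots> = sum_pairs (\<Delta> y) (\<lambda>a b. \<kappa> (S b) (S a))"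
    using bilinear_mapD[OF \<kappa>]
    by (intro counit_left_form linear_map_sum_pairs_coprod[OF bilinear_mapI vector_space_field]
        linear_map_compose[OF antipode_linear])
  finally show ?thesis .
qed

end

section \<open>Morphisms of Hopf algebras\<close>

locale hopf_hom = A: hopf_alg sA \<Delta>A \<epsilon>A SA + B: hopf_alg sB \<Delta>B \<epsilon>B SB
  for sA :: "'k::field \<Rightarrow> 'a::ring_1 \<Rightarrow> 'a" and \<Delta>A \<epsilon>A SA
    and sB :: "'k \<Rightarrow> 'b::ring_1 \<Rightarrow> 'b" and \<Delta>B \<epsilon>B SB +
  fixes p :: "'a \<Rightarrow> 'b"
  assumes hopf_morphism: "hopf_morphism sA \<Delta>A \<epsilon>A sB \<Delta>B \<epsilon>B p"
begin

lemma p_linear: "linear_map sA sB p"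
  and p_mult: "p (x * y) = p x * p y"
  and p_one: "p 1 = 1"
  and counit_p: "\<epsilon>B (p x) = \<epsilon>A x"
  and coprod_p: "tensor_eq sB sB (\<Delta>B (p x)) (map (\<lambda>(a,b). (p a, p b)) (\<Delta>A x))"
  using hopf_morphism A.vector_space_scale B.vector_space_scale
  by (auto simp: hopf_morphism_def linear_iff_linear_map)

lemma antipode_p_convolution_p: "sum_pairs (\<Delta>A x) (\<lambda>a b. SB (p a) * p b) = sB (\<epsilon>A x) 1"
proof -
  have "bilinear_map sB sB sB (\<lambda>c d. SB c * d)"
    by (intro bilinear_mapI linear_map_compose[OF B.antipode_linear B.linear_mult_right]
        B.linear_mult_left)
  from B.sum_pairs_coprod_eq[OF this B.vector_space_scale coprod_p, of x]
  show ?thesis by (simp add: B.antipode_left counit_p)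
qed

lemma p_convolution_p_antipode: "sum_pairs (\<Delta>A x) (\<lambda>a b. p a * p (SA b)) = sB (\<epsilon>A x) 1"
  using linear_map_sum_pairs[OF p_linear, of "\<Delta>A x" "\<lambda>a b. a * SA b"]
  by (simp add: A.antipode_right p_mult linear_map_scale[OF p_linear] p_one)

text \<open>Convolution is associative by coassociativity, so the left inverse \<open>SB \<circ> p\<close> and the
  right inverse \<open>p \<circ> SA\<close> of \<open>p\<close> coincide.\<close>

lemma antipode_p: "SB (p x) = p (SA x)"
proof (rule eq_if_linear_forms_eq[OF B.vector_space_scale])
  fix \<theta> assume \<theta>: "linear_map sB (*) \<theta>"
  have \<theta>_left: "linear_map sB (*) (\<lambda>z. \<theta> (u * z))"
    and \<theta>_right: "linear_map sB (*) (\<lambda>z. \<theta> (z * v))"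
    and \<theta>_mid: "linear_map sB (*) (\<lambda>z. \<theta> (u * z * v))" for u v
    by (rule linear_map_compose[OF B.linear_mult_left \<theta>] linear_map_compose[OF B.linear_mult_right \<theta>]
        linear_map_compose[OF linear_map_compose[OF B.linear_mult_left B.linear_mult_right] \<theta>])+
  have "trilinear_form sA sA sA (\<lambda>u v w. \<theta> (SB (p u) * p v * p (SA w)))"
    by (intro trilinear_formI linear_map_compose[OF p_linear \<theta>_mid]
        linear_map_compose[OF linear_map_compose[OF A.antipode_linear p_linear] \<theta>_left]
        linear_map_compose[OF linear_map_compose[OF linear_map_compose[OF p_linear B.antipode_linear]
          B.linear_mult_right] \<theta>_right])
  note coassoc = A.coassoc_sum_pairs[OF this, of x]
  have "\<theta> (SB (p x)) = sum_pairs (\<Delta>A x) (\<lambda>a b. \<theta> (SB (p a)) * \<epsilon>A b)"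
    by (rule A.counit_right_form[OF linear_map_compose[OF linear_map_compose[OF p_linear B.antipode_linear] \<theta>], symmetric])
  also have "\<dots> = sum_pairs (\<Delta>A x) (\<lambda>a b. sum_pairs (\<Delta>A b) (\<lambda>b1 b2. \<theta> (SB (p a) * p b1 * p (SA b2))))"
    by (simp add: mult.assoc linear_map_sum_pairs[OF \<theta>_left, symmetric] p_convolution_p_antipode
        linear_map_scale[OF \<theta>] mult.commute)
  also have "\<dots> = sum_pairs (\<Delta>A x) (\<lambda>a b. \<epsilon>A a * \<theta> (p (SA b)))"
    using coassoc by (simp add: linear_map_sum_pairs[OF \<theta>_right, symmetric] antipode_p_convolution_p
        linear_map_scale[OF \<theta>])
  also have "\<dots> = \<theta> (p (SA x))"
    by (rule A.counit_left_form[OF linear_map_compose[OF linear_map_compose[OF A.antipode_linear p_linear] \<theta>]])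
  finally show "\<theta> (SB (p x)) = \<theta> (p (SA x))" .
qed

end

section \<open>The h-inverse\<close>

lemma h_inverse_mono: "C \<subseteq> C' \<Longrightarrow> h_inverse sA \<Delta>A sB \<epsilon>B p C \<subseteq> h_inverse sA \<Delta>A sB \<epsilon>B p C'"
  unfolding h_inverse_def by (auto intro: in_tensor_left_mono[rotated] simp: aug_ideal_def)

context hopf_hom begin

lemma p_minus_counit_mem_aug_ideal:
  assumes D: "hopf_subalgebra sA \<Delta>A SA D" and a: "a \<in> D"
  shows "p a - sB (\<epsilon>A a) 1 \<in> aug_ideal \<epsilon>B (p ` D)"
proof -
  have "a + sA (- \<epsilon>A a) 1 \<in> D"
    using D a unfolding hopf_subalgebra_def subspace_iff[OF A.vector_space_scale] by blast
  then have "a - sA (\<epsilon>A a) 1 \<in> D" by simp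
  moreover have "p (a - sA (\<epsilon>A a) 1) = p a - sB (\<epsilon>A a) 1"
    by (simp add: linear_map_diff[OF p_linear] linear_map_scale[OF p_linear] p_one)
  moreover have "\<epsilon>B (p a - sB (\<epsilon>A a) 1) = 0"
    by (simp add: linear_map_diff[OF B.counit_linear] linear_map_scale[OF B.counit_linear] counit_p
        B.counit_one)
  ultimately show ?thesis by (force simp: aug_ideal_def)
qed

text \<open>For \<open>x \<in> D\<close> write \<open>\<Delta>A x = \<Sum> x1 \<otimes> x2\<close> with all \<open>x1 \<in> D\<close>; then
  \<open>(p \<otimes> id) (\<Delta>A x) - 1 \<otimes> x = \<Sum> (p x1 - \<epsilon>A x1 1) \<otimes> x2\<close> by the counit axiom.\<close>

lemma subset_h_inverse_image:
  assumes D: "hopf_subalgebra sA \<Delta>A SA D"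
  shows "D \<subseteq> h_inverse sA \<Delta>A sB \<epsilon>B p (p ` D)"
proof
  fix x assume "x \<in> D"
  then obtain ys where ys: "fst ` set ys \<subseteq> D" "tensor_eq sA sA (\<Delta>A x) ys"
    using D by (auto simp: hopf_subalgebra_def in_tensor_def)
  let ?zs = "map (\<lambda>(a,b). (p a - sB (\<epsilon>A a) 1, b)) ys"
  have "fst ` set ?zs \<subseteq> aug_ideal \<epsilon>B (p ` D)"
    using ys(1) p_minus_counit_mem_aug_ideal[OF D] by auto
  moreover have "tensor_eq sB sA (map (\<lambda>(a,b). (p a, b)) (\<Delta>A x) @ [(- 1, x)]) ?zs"
  proof (rule tensor_eq_iff[OF B.vector_space_scale A.vector_space_scale, THEN iffD2], intro allI impI)
    fix \<phi> \<psi> assume \<phi>: "linear_map sB (*) \<phi>" and \<psi>: "linear_map sA (*) \<psi>"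
    have "sum_pairs (\<Delta>A x) (\<lambda>a b. \<phi> (p a) * \<psi> b) = sum_pairs ys (\<lambda>a b. \<phi> (p a) * \<psi> b)"
      by (rule tensor_eqD[OF ys(2) A.vector_space_scale A.vector_space_scale linear_map_compose[OF p_linear \<phi>] \<psi>])
    moreover have "\<psi> x = sum_pairs ys (\<lambda>a b. \<epsilon>A a * \<psi> b)"
      using A.counit_left_form[OF \<psi>, of x]
        tensor_eqD[OF ys(2) A.vector_space_scale A.vector_space_scale A.counit_linear \<psi>] by simp
    ultimately show "sum_pairs (map (\<lambda>(a,b). (p a, b)) (\<Delta>A x) @ [(- 1, x)]) (\<lambda>a b. \<phi> a * \<psi> b)
      = sum_pairs ?zs (\<lambda>a b. \<phi> a * \<psi> b)"
      by (simp add: linear_map_diff[OF \<phi>] linear_map_scale[OF \<phi>] linear_map_neg[OF \<phi>] left_diff_distrib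
          sum_pairs_diff sum_pairs_mult_left mult.assoc mult.left_commute)
  qed
  ultimately show "x \<in> h_inverse sA \<Delta>A sB \<epsilon>B p (p ` D)"
    unfolding h_inverse_def in_tensor_left_def by blast
qed

end

locale hopf_hom_subalgebra = hopf_hom +
  fixes C :: "'b::ring_1 set"
  assumes subalgebra: "hopf_subalgebra sB \<Delta>B SB C"
begin

abbreviation "C_plus \<equiv> aug_ideal \<epsilon>B C"
abbreviation "h_inv \<equiv> h_inverse sA \<Delta>A sB \<epsilon>B p C"

lemma C_subspace: "module.subspace sB C"
  and one_C: "1 \<in> C"
  and mult_C: "u \<in> C \<Longrightarrow> w \<in> C \<Longrightarrow> u * w \<in> C"
  and antipode_C: "u \<in> C \<Longrightarrow> SB u \<in> C"
  using subalgebra by (auto simp: hopf_subalgebra_def)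

lemma C_plus_subspace: "module.subspace sB C_plus"
  using C_subspace linear_map_0[OF B.counit_linear] linear_map_add[OF B.counit_linear]
    linear_map_scale[OF B.counit_linear]
  unfolding subspace_iff[OF B.vector_space_scale] aug_ideal_def by auto

lemma mult_C_plus: "u \<in> C \<Longrightarrow> w \<in> C_plus \<Longrightarrow> u * w \<in> C_plus"
  by (auto simp: aug_ideal_def mult_C B.counit_mult)

lemma antipode_C_plus: "u \<in> C_plus \<Longrightarrow> SB u \<in> C_plus"
  by (auto simp: aug_ideal_def antipode_C B.counit_antipode)

lemma mem_h_inverse_iff:
  "x \<in> h_inv \<longleftrightarrow>
   (\<forall>\<phi> \<psi>. linear_map sB (*) \<phi> \<longrightarrow> (\<forall>u\<in>C_plus. \<phi> u = 0) \<longrightarrow> linear_map sA (*) \<psi> \<longrightarrow>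
      sum_pairs (\<Delta>A x) (\<lambda>a b. \<phi> (p a) * \<psi> b) = \<phi> 1 * \<psi> x)"
  unfolding h_inverse_def mem_Collect_eq
    in_tensor_left_iff[OF B.vector_space_scale A.vector_space_scale C_plus_subspace]
  by (simp add: linear_map_neg)

lemma mem_h_inverseI:
  "(\<And>\<phi> \<psi>. linear_map sB (*) \<phi> \<Longrightarrow> \<forall>u\<in>C_plus. \<phi> u = 0 \<Longrightarrow> linear_map sA (*) \<psi> \<Longrightarrow>
     sum_pairs (\<Delta>A x) (\<lambda>a b. \<phi> (p a) * \<psi> b) = \<phi> 1 * \<psi> x) \<Longrightarrow> x \<in> h_inv"
  and mem_h_inverseD:
  "x \<in> h_inv \<Longrightarrow> linear_map sB (*) \<phi> \<Longrightarrow> \<forall>u\<in>C_plus. \<phi> u = 0 \<Longrightarrow> linear_map sA (*) \<psi> \<Longrightarrow>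
     sum_pairs (\<Delta>A x) (\<lambda>a b. \<phi> (p a) * \<psi> b) = \<phi> 1 * \<psi> x"
  using mem_h_inverse_iff by blast+

lemma h_inverse_decomposition:
  assumes "x \<in> h_inv"
  obtains ys where "fst ` set ys \<subseteq> C_plus"
    "\<And>\<beta>. bilinear_map sB sA (*) \<beta> \<Longrightarrow> sum_pairs (\<Delta>A x) (\<lambda>a b. \<beta> (p a) b) = \<beta> 1 x + sum_pairs ys \<beta>"
proof -
  obtain ys where ys: "fst ` set ys \<subseteq> C_plus"
    "tensor_eq sB sA (map (\<lambda>(a,b). (p a, b)) (\<Delta>A x) @ [(- 1, x)]) ys"
    using assms by (auto simp: h_inverse_def in_tensor_left_def)
  have "sum_pairs (\<Delta>A x) (\<lambda>a b. \<beta> (p a) b) = \<beta> 1 x + sum_pairs ys \<beta>"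
    if \<beta>: "bilinear_map sB sA (*) \<beta>" for \<beta>
    using tensor_eq_bilinear_form[OF B.vector_space_scale A.vector_space_scale ys(2) \<beta>]
      linear_map_neg[OF bilinear_mapD(1)[OF \<beta>], of 1 x]
    by (simp add: algebra_simps)
  with ys(1) show ?thesis using that by blast
qed

lemma image_h_inverse_subset: "p ` h_inv \<subseteq> C"
proof clarify
  fix x assume x: "x \<in> h_inv"
  have "p x - sB (\<epsilon>A x) 1 \<in> C_plus"
  proof (rule in_subspace_if_annihilated[OF B.vector_space_scale C_plus_subspace])
    fix \<phi> assume \<phi>: "linear_map sB (*) \<phi>" and "\<forall>u\<in>C_plus. \<phi> u = 0"
    then have "\<phi> (p x) = \<phi> 1 * \<epsilon>A x"
      using A.counit_right_form[OF linear_map_compose[OF p_linear \<phi>], of x]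
        mem_h_inverseD[OF x \<phi> _ A.counit_linear] by simp
    then show "\<phi> (p x - sB (\<epsilon>A x) 1) = 0"
      by (simp add: linear_map_diff[OF \<phi>] linear_map_scale[OF \<phi>] mult.commute)
  qed
  then have "p x - sB (\<epsilon>A x) 1 + sB (\<epsilon>A x) 1 \<in> C"
    using C_subspace one_C unfolding subspace_iff[OF B.vector_space_scale] aug_ideal_def by blast
  then show "p x \<in> C" by simp
qed

lemma h_inverse_subspace: "module.subspace sA h_inv"
proof -
  have lin: "linear_map sA (*) (\<lambda>u. sum_pairs (\<Delta>A u) (\<lambda>a b. \<phi> (p a) * \<psi> b))"
    if "linear_map sB (*) \<phi>" "linear_map sA (*) \<psi>" for \<phi> \<psi>
    by (intro A.linear_map_sum_pairs_coprod[OF bilinear_mapI vector_space_field] linear_form_mult_left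
        linear_form_mult_right linear_map_compose[OF p_linear] that)
  show ?thesis
    unfolding subspace_iff[OF A.vector_space_scale]
  proof (intro conjI ballI allI)
    show "0 \<in> h_inv"
      by (rule mem_h_inverseI) (simp add: linear_map_0[OF lin] linear_map_0)
    show "x + y \<in> h_inv" if "x \<in> h_inv" "y \<in> h_inv" for x y
      using that by (intro mem_h_inverseI)
        (simp add: linear_map_add[OF lin] linear_map_add mem_h_inverseD ring_distribs)
    show "sA c x \<in> h_inv" if "x \<in> h_inv" for c x
      using that by (intro mem_h_inverseI)
        (simp add: linear_map_scale[OF lin] linear_map_scale mem_h_inverseD mult.left_commute)
  qed
qed

lemma one_mem_h_inverse: "1 \<in> h_inv"
proof (rule mem_h_inverseI)
  fix \<phi> \<psi> assume \<phi>: "linear_map sB (*) \<phi>" and \<psi>: "linear_map sA (*) \<psi>"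
  have "bilinear_map sA sA (*) (\<lambda>a b. \<phi> (p a) * \<psi> b)"
    by (intro bilinear_mapI linear_form_mult_left linear_form_mult_right
        linear_map_compose[OF p_linear \<phi>] \<psi>)
  then show "sum_pairs (\<Delta>A 1) (\<lambda>a b. \<phi> (p a) * \<psi> b) = \<phi> 1 * \<psi> 1"
    using A.sum_pairs_coprod_eq[OF _ vector_space_field A.coprod_one] by (simp add: p_one)
qed

lemma h_inverse_left_mult:
  assumes x: "x \<in> h_inv" and u: "u \<in> C" and \<phi>: "linear_map sB (*) \<phi>"
    and \<phi>0: "\<forall>w\<in>C_plus. \<phi> w = 0" and \<psi>: "linear_map sA (*) \<psi>"
  shows "sum_pairs (\<Delta>A x) (\<lambda>a b. \<phi> (u * p a) * \<psi> (v * b)) = \<phi> u * \<psi> (v * x)"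
  using mem_h_inverseD[OF x linear_map_compose[OF B.linear_mult_left \<phi>] _
      linear_map_compose[OF A.linear_mult_left \<psi>]] \<phi>0 mult_C_plus[OF u]
  by simp

text \<open>Writing \<open>(p \<otimes> id) (\<Delta>A x) = 1 \<otimes> x + \<Sum> c\<^sub>i \<otimes> a\<^sub>i\<close> with \<open>c\<^sub>i \<in> C\<^sup>+\<close>, the terms
  \<open>c\<^sub>i p(y1) \<otimes> a\<^sub>i y2\<close> of \<open>(p \<otimes> id) (\<Delta>A (x y))\<close> vanish because \<open>C\<^sup>+\<close> is an ideal of \<open>C\<close>.\<close>

lemma mult_mem_h_inverse:
  assumes x: "x \<in> h_inv" and y: "y \<in> h_inv"
  shows "x * y \<in> h_inv"
proof (rule mem_h_inverseI)
  fix \<phi> \<psi> assume \<phi>: "linear_map sB (*) \<phi>" and \<phi>0: "\<forall>u\<in>C_plus. \<phi> u = 0"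
    and \<psi>: "linear_map sA (*) \<psi>"
  obtain ys where ys: "fst ` set ys \<subseteq> C_plus"
    and decomp: "\<And>\<beta>. bilinear_map sB sA (*) \<beta> \<Longrightarrow>
      sum_pairs (\<Delta>A x) (\<lambda>a b. \<beta> (p a) b) = \<beta> 1 x + sum_pairs ys \<beta>"
    using h_inverse_decomposition[OF x] by blast
  have "bilinear_map sA sA (*) (\<lambda>a b. \<phi> (p a) * \<psi> b)"
    by (intro bilinear_mapI linear_form_mult_left linear_form_mult_right
        linear_map_compose[OF p_linear \<phi>] \<psi>)
  then have "sum_pairs (\<Delta>A (x * y)) (\<lambda>a b. \<phi> (p a) * \<psi> b)
      = sum_pairs (\<Delta>A y) (\<lambda>c d. sum_pairs (\<Delta>A x) (\<lambda>a b. \<phi> (p a * p c) * \<psi> (b * d)))"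
    using A.sum_pairs_coprod_eq[OF _ vector_space_field A.coprod_mult]
    by (simp add: p_mult sum_pairs_swap[of "\<Delta>A x"])
  also have "\<dots> = sum_pairs (\<Delta>A y) (\<lambda>c d. \<phi> (1 * p c) * \<psi> (x * d))
      + sum_pairs ys (\<lambda>u v. sum_pairs (\<Delta>A y) (\<lambda>c d. \<phi> (u * p c) * \<psi> (v * d)))"
  proof -
    have "bilinear_map sB sA (*) (\<lambda>u v. \<phi> (u * p c) * \<psi> (v * d))" for c d
      by (intro bilinear_mapI linear_form_mult_left linear_form_mult_right
          linear_map_compose[OF B.linear_mult_right \<phi>] linear_map_compose[OF A.linear_mult_right \<psi>])
    from decomp[OF this] show ?thesis by (simp add: sum_pairs_add sum_pairs_swap[of ys])
  qed
  also have "\<dots> = \<phi> 1 * \<psi> (x * y) + sum_pairs ys (\<lambda>u v. \<phi> u * \<psi> (v * y))"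
  proof -
    have "sum_pairs (\<Delta>A y) (\<lambda>c d. \<phi> (u * p c) * \<psi> (v * d)) = \<phi> u * \<psi> (v * y)"
      if "u \<in> C" for u v
      by (rule h_inverse_left_mult[OF y that \<phi> \<phi>0 \<psi>])
    moreover have "u \<in> C" if "(u, v) \<in> set ys" for u v
      using ys that by (force simp: aug_ideal_def)
    ultimately show ?thesis
      using h_inverse_left_mult[OF y one_C \<phi> \<phi>0 \<psi>, of x] by (simp cong: sum_pairs_cong)
  qed
  also have "\<dots> = \<phi> 1 * \<psi> (x * y)"
    using ys \<phi>0 by (force intro: trans[OF sum_pairs_cong sum_pairs_zero])
  finally show "sum_pairs (\<Delta>A (x * y)) (\<lambda>a b. \<phi> (p a) * \<psi> b) = \<phi> 1 * \<psi> (x * y)" .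
qed

text \<open>By coassociativity and cocommutativity, \<open>(\<phi> p \<otimes> \<psi>) \<Delta>A ((\<chi> \<otimes> id) \<Delta>A x)\<close> equals
  \<open>(\<phi> p \<otimes> \<psi>') \<Delta>A x\<close> for \<open>\<psi>' = (\<chi> \<otimes> \<psi>) \<circ> \<Delta>A\<close>.\<close>

lemma contraction_mem_h_inverse:
  assumes cocomm: "cocommutative sA \<Delta>A" and x: "x \<in> h_inv" and \<chi>: "linear_map sA (*) \<chi>"
  shows "sum_pairs (\<Delta>A x) (\<lambda>a b. sA (\<chi> a) b) \<in> h_inv"
proof (rule mem_h_inverseI)
  fix \<phi> \<psi> assume \<phi>: "linear_map sB (*) \<phi>" and \<phi>0: "\<forall>u\<in>C_plus. \<phi> u = 0"
    and \<psi>: "linear_map sA (*) \<psi>"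
  have \<phi>p: "linear_map sA (*) (\<lambda>u. \<phi> (p u))" by (rule linear_map_compose[OF p_linear \<phi>])
  have G: "linear_map sA (*) (\<lambda>u. sum_pairs (\<Delta>A u) (\<lambda>a b. \<phi> (p a) * \<psi> b))"
    by (intro A.linear_map_sum_pairs_coprod[OF bilinear_mapI vector_space_field]
        linear_form_mult_left linear_form_mult_right \<phi>p \<psi>)
  define \<psi>' where "\<psi>' b = sum_pairs (\<Delta>A b) (\<lambda>b1 b2. \<chi> b1 * \<psi> b2)" for b
  have \<psi>': "linear_map sA (*) \<psi>'"
    unfolding \<psi>'_def
    by (intro A.linear_map_sum_pairs_coprod[OF bilinear_mapI vector_space_field]
        linear_form_mult_left linear_form_mult_right \<chi> \<psi>)
  have "sum_pairs (\<Delta>A (sum_pairs (\<Delta>A x) (\<lambda>a b. sA (\<chi> a) b))) (\<lambda>a b. \<phi> (p a) * \<psi> b)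
      = sum_pairs (\<Delta>A x) (\<lambda>a b. sum_pairs (\<Delta>A b) (\<lambda>b1 b2. \<chi> a * \<phi> (p b1) * \<psi> b2))"
    by (simp add: linear_map_sum_pairs[OF G] linear_map_scale[OF G] sum_pairs_mult_left mult.assoc)
  also have "\<dots> = sum_pairs (\<Delta>A x) (\<lambda>a b. sum_pairs (\<Delta>A a) (\<lambda>a1 a2. \<chi> a1 * \<phi> (p a2) * \<psi> b))"
    by (intro A.coassoc_sum_pairs[symmetric] trilinear_formI linear_form_mult_left
        linear_form_mult_right \<chi> \<phi>p \<psi>)
  also have "\<dots> = sum_pairs (\<Delta>A x) (\<lambda>a b. sum_pairs (\<Delta>A a) (\<lambda>a1 a2. \<phi> (p a1) * \<chi> a2 * \<psi> b))"
  proof (rule sum_pairs_cong)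
    fix a b
    have "bilinear_map sA sA (*) (\<lambda>a1 a2. \<chi> a1 * \<phi> (p a2) * \<psi> b)"
      by (intro bilinear_mapI linear_form_mult_left linear_form_mult_right \<chi> \<phi>p)
    from A.cocommutative_sum_pairs[OF cocomm this vector_space_field]
    show "sum_pairs (\<Delta>A a) (\<lambda>a1 a2. \<chi> a1 * \<phi> (p a2) * \<psi> b)
      = sum_pairs (\<Delta>A a) (\<lambda>a1 a2. \<phi> (p a1) * \<chi> a2 * \<psi> b)"
      by (simp add: mult_ac)
  qed
  also have "\<dots> = sum_pairs (\<Delta>A x) (\<lambda>a b. sum_pairs (\<Delta>A b) (\<lambda>b1 b2. \<phi> (p a) * \<chi> b1 * \<psi> b2))"
    by (intro A.coassoc_sum_pairs trilinear_formI linear_form_mult_left linear_form_mult_right \<chi> \<phi>p \<psi>)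
  also have "\<dots> = \<phi> 1 * \<psi>' x"
    using mem_h_inverseD[OF x \<phi> \<phi>0 \<psi>'] by (simp add: \<psi>'_def sum_pairs_mult_left mult.assoc)
  also have "\<dots> = \<phi> 1 * \<psi> (sum_pairs (\<Delta>A x) (\<lambda>a b. sA (\<chi> a) b))"
    by (simp add: \<psi>'_def linear_map_sum_pairs[OF \<psi>] linear_map_scale[OF \<psi>])
  finally show "sum_pairs (\<Delta>A (sum_pairs (\<Delta>A x) (\<lambda>a b. sA (\<chi> a) b))) (\<lambda>a b. \<phi> (p a) * \<psi> b)
    = \<phi> 1 * \<psi> (sum_pairs (\<Delta>A x) (\<lambda>a b. sA (\<chi> a) b))" .
qed

lemma coprod_mem_h_inverse:
  assumes cocomm: "cocommutative sA \<Delta>A" and x: "x \<in> h_inv"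
  shows "in_tensor sA sA h_inv h_inv (\<Delta>A x)"
proof (rule in_tensor_if_contractions_in[OF A.vector_space_scale A.vector_space_scale
      h_inverse_subspace h_inverse_subspace])
  fix \<psi> assume \<psi>: "linear_map sA (*) \<psi>"
  have "bilinear_map sA sA sA (\<lambda>a b. sA (\<psi> b) a)"
    by (intro bilinear_mapI linear_map_scale_left[OF A.vector_space_scale]
        linear_map_scale_by_form[OF A.vector_space_scale \<psi>])
  then show "sum_pairs (\<Delta>A x) (\<lambda>a b. sA (\<psi> b) a) \<in> h_inv"
    using A.cocommutative_sum_pairs[OF cocomm _ A.vector_space_scale]
      contraction_mem_h_inverse[OF cocomm x \<psi>] by simp
qed (rule contraction_mem_h_inverse[OF cocomm x])

lemma antipode_mem_h_inverse:
  assumes cocomm: "cocommutative sA \<Delta>A" and x: "x \<in> h_inv"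
  shows "SA x \<in> h_inv"
proof (rule mem_h_inverseI)
  fix \<phi> \<psi> assume \<phi>: "linear_map sB (*) \<phi>" and \<phi>0: "\<forall>u\<in>C_plus. \<phi> u = 0"
    and \<psi>: "linear_map sA (*) \<psi>"
  have \<phi>S: "linear_map sB (*) (\<lambda>u. \<phi> (SB u))" by (rule linear_map_compose[OF B.antipode_linear \<phi>])
  have \<psi>S: "linear_map sA (*) (\<lambda>u. \<psi> (SA u))" by (rule linear_map_compose[OF A.antipode_linear \<psi>])
  have "bilinear_map sA sA (*) (\<lambda>a b. \<phi> (SB (p b)) * \<psi> (SA a))"
    by (intro bilinear_mapI linear_form_mult_left linear_form_mult_right
        linear_map_compose[OF p_linear \<phi>S] \<psi>S)
  note swap = A.cocommutative_sum_pairs[OF cocomm this vector_space_field]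
  have "sum_pairs (\<Delta>A (SA x)) (\<lambda>a b. \<phi> (p a) * \<psi> b)
      = sum_pairs (\<Delta>A x) (\<lambda>a b. \<phi> (SB (p b)) * \<psi> (SA a))"
    using A.coprod_antipode[OF bilinear_mapI, of "\<lambda>a b. \<phi> (p a) * \<psi> b"]
    by (simp add: linear_form_mult_left linear_form_mult_right linear_map_compose[OF p_linear \<phi>] \<psi>
        antipode_p)
  also have "\<dots> = \<phi> (SB 1) * \<psi> (SA x)"
    using swap mem_h_inverseD[OF x \<phi>S _ \<psi>S] \<phi>0 antipode_C_plus by simp
  finally show "sum_pairs (\<Delta>A (SA x)) (\<lambda>a b. \<phi> (p a) * \<psi> b) = \<phi> 1 * \<psi> (SA x)"
    by (simp add: B.antipode_one)
qed

lemma hopf_subalgebra_h_inverse: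
  "cocommutative sA \<Delta>A \<Longrightarrow> hopf_subalgebra sA \<Delta>A SA h_inv"
  unfolding hopf_subalgebra_def
  using h_inverse_subspace one_mem_h_inverse mult_mem_h_inverse coprod_mem_h_inverse
    antipode_mem_h_inverse by blast

end

context hopf_hom begin

lemma subset_h_inverse_iff:
  assumes C: "hopf_subalgebra sB \<Delta>B SB C" and D: "hopf_subalgebra sA \<Delta>A SA D"
  shows "D \<subseteq> h_inverse sA \<Delta>A sB \<epsilon>B p C \<longleftrightarrow> p ` D \<subseteq> C"
proof
  interpret hopf_hom_subalgebra sA \<Delta>A \<epsilon>A SA sB \<Delta>B \<epsilon>B SB p C
    by unfold_locales (rule C)
  show "D \<subseteq> h_inv \<Longrightarrow> p ` D \<subseteq> C" using image_h_inverse_subset by blast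
  show "p ` D \<subseteq> C \<Longrightarrow> D \<subseteq> h_inv"
    using subset_h_inverse_image[OF D] h_inverse_mono[of "p ` D" C sA \<Delta>A sB \<epsilon>B p] by blast
qed

lemma image_h_inverse_eq_iff:
  assumes cocomm: "cocommutative sA \<Delta>A" and C: "hopf_subalgebra sB \<Delta>B SB C"
  shows "C = p ` h_inverse sA \<Delta>A sB \<epsilon>B p C \<longleftrightarrow> (\<exists>D. hopf_subalgebra sA \<Delta>A SA D \<and> C = p ` D)"
proof
  interpret hopf_hom_subalgebra sA \<Delta>A \<epsilon>A SA sB \<Delta>B \<epsilon>B SB p C
    by unfold_locales (rule C)
  show "C = p ` h_inv \<Longrightarrow> \<exists>D. hopf_subalgebra sA \<Delta>A SA D \<and> C = p ` D"
    using hopf_subalgebra_h_inverse[OF cocomm] by blast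
  assume "\<exists>D. hopf_subalgebra sA \<Delta>A SA D \<and> C = p ` D"
  then obtain D where D: "hopf_subalgebra sA \<Delta>A SA D" and C_eq: "C = p ` D" by blast
  then have "D \<subseteq> h_inv" using subset_h_inverse_iff[OF C D] by blast
  then show "C = p ` h_inv" using C_eq image_h_inverse_subset by blast
qed

end

theorem lemma2p5:
  fixes sA :: "'k::field \<Rightarrow> 'a::ring_1 \<Rightarrow> 'a" and \<Delta>A :: "'a \<Rightarrow> ('a \<times> 'a) list"
    and \<epsilon>A :: "'a \<Rightarrow> 'k" and SA :: "'a \<Rightarrow> 'a"
    and sB :: "'k \<Rightarrow> 'b::ring_1 \<Rightarrow> 'b" and \<Delta>B :: "'b \<Rightarrow> ('b \<times> 'b) list"
    and \<epsilon>B :: "'b \<Rightarrow> 'k" and SB :: "'b \<Rightarrow> 'b"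
    and p :: "'a \<Rightarrow> 'b"
  assumes "hopf_algebra sA \<Delta>A \<epsilon>A SA" and "cocommutative sA \<Delta>A"
    and "hopf_algebra sB \<Delta>B \<epsilon>B SB" and "cocommutative sB \<Delta>B"
    and "hopf_morphism sA \<Delta>A \<epsilon>A sB \<Delta>B \<epsilon>B p"
  shows "(\<forall>C. hopf_subalgebra sB \<Delta>B SB C \<longrightarrow> p ` h_inverse sA \<Delta>A sB \<epsilon>B p C \<subseteq> C)
    \<and> (\<forall>D. hopf_subalgebra sA \<Delta>A SA D \<longrightarrow> D \<subseteq> h_inverse sA \<Delta>A sB \<epsilon>B p (p ` D))
    \<and> (\<forall>C D. hopf_subalgebra sB \<Delta>B SB C \<longrightarrow> hopf_subalgebra sA \<Delta>A SA D \<longrightarrow>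
          (D \<subseteq> h_inverse sA \<Delta>A sB \<epsilon>B p C \<longleftrightarrow> p ` D \<subseteq> C))
    \<and> (\<forall>C. hopf_subalgebra sB \<Delta>B SB C \<longrightarrow>
          (C = p ` h_inverse sA \<Delta>A sB \<epsilon>B p C \<longleftrightarrow>
           (\<exists>D. hopf_subalgebra sA \<Delta>A SA D \<and> C = p ` D)))"
proof -
  interpret hopf_hom sA \<Delta>A \<epsilon>A SA sB \<Delta>B \<epsilon>B SB p
    using assms by (simp add: hopf_hom_def hopf_hom_axioms_def hopf_alg_def)
  show ?thesis
  proof (intro conjI allI impI)
    fix C assume C: "hopf_subalgebra sB \<Delta>B SB C"
    interpret hopf_hom_subalgebra sA \<Delta>A \<epsilon>A SA sB \<Delta>B \<epsilon>B SB p C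
      by unfold_locales (rule C)
    show "p ` h_inverse sA \<Delta>A sB \<epsilon>B p C \<subseteq> C" by (rule image_h_inverse_subset)
    show "C = p ` h_inverse sA \<Delta>A sB \<epsilon>B p C \<longleftrightarrow> (\<exists>D. hopf_subalgebra sA \<Delta>A SA D \<and> C = p ` D)"
      by (rule image_h_inverse_eq_iff[OF assms(2) C])
  qed (fact subset_h_inverse_image subset_h_inverse_iff)+
qed

end
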